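(* Let $\nu$ be a Krull valuation on $\mathbb{K}[x]$, $\mu$ an extension of $\nu$ to $\overline{\mathbb{K}}[x]$, $f\in\mathbb{K}[x]$ non-constant and $a\in\overline{\mathbb{K}}$ an optimizing root of $f$. Then $\nu(f)\in\mu\overline{\mathbb{K}}$ if and only if $\delta(f)\in\mu\overline{\mathbb{K}}$.
   Context: $\overline{\mathbb{K}}$ is an algebraic closure of $\mathbb{K}$, $\mu\overline{\mathbb{K}}$ the value group of $\mu$ restricted to $\overline{\mathbb{K}}$. For non-constant $f$, $\delta(f)=\max\{\mu(x-c):c\in\overline{\mathbb{K}},f(c)=0\}$, and a root $c$ with $\mu(x-c)=\delta(f)$ is an optimizing root. *)

theory Defs
  imports "HOL-Computational_Algebra.Polynomial"
begin

text \<open>Krull valuation on a polynomial ring with values in an ordered abelian group: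
  the value of the zero polynomial is infinity, which is encoded by leaving v 0
  unconstrained and only imposing the axioms on nonzero polynomials (trivial support).\<close>
definition krull_valuation :: "('a::field poly \<Rightarrow> 'g::linordered_ab_group_add) \<Rightarrow> bool" where
  "krull_valuation v \<longleftrightarrow>
     (\<forall>f g. f \<noteq> 0 \<longrightarrow> g \<noteq> 0 \<longrightarrow> v (f * g) = v f + v g) \<and>
     (\<forall>f g. f \<noteq> 0 \<longrightarrow> g \<noteq> 0 \<longrightarrow> f + g \<noteq> 0 \<longrightarrow> min (v f) (v g) \<le> v (f + g))"

definition is_alg_closure_emb :: "('k::field \<Rightarrow> 'kb::alg_closed_field) \<Rightarrow> bool" where
  "is_alg_closure_emb \<iota> \<longleftrightarrow>
     (\<forall>a b. \<iota> (a + b) = \<iota> a + \<iota> b) \<and> (\<forall>a b. \<iota> (a * b) = \<iota> a * \<iota> b) \<and> \<iota> 1 = 1 \<and>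
     (\<forall>c. \<exists>p. p \<noteq> 0 \<and> poly (map_poly \<iota> p) c = 0)"

definition extends_val ::
  "('k::field \<Rightarrow> 'kb::field) \<Rightarrow> ('kb poly \<Rightarrow> 'g) \<Rightarrow> ('k poly \<Rightarrow> 'g) \<Rightarrow> bool" where
  "extends_val \<iota> \<mu> \<nu> \<longleftrightarrow> (\<forall>f. f \<noteq> 0 \<longrightarrow> \<mu> (map_poly \<iota> f) = \<nu> f)"

definition value_group :: "('kb::field poly \<Rightarrow> 'g) \<Rightarrow> 'g set" where
  "value_group \<mu> = {\<mu> [:c:] | c. c \<noteq> 0}"

definition delta ::
  "('k::field \<Rightarrow> 'kb::field) \<Rightarrow> ('kb poly \<Rightarrow> 'g::linorder) \<Rightarrow> 'k poly \<Rightarrow> 'g" where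
  "delta \<iota> \<mu> f = Max {\<mu> [:-c, 1:] | c. poly (map_poly \<iota> f) c = 0}"

definition optimizing_root ::
  "('k::field \<Rightarrow> 'kb::field) \<Rightarrow> ('kb poly \<Rightarrow> 'g::linorder) \<Rightarrow> 'k poly \<Rightarrow> 'kb \<Rightarrow> bool" where
  "optimizing_root \<iota> \<mu> f a \<longleftrightarrow> poly (map_poly \<iota> f) a = 0 \<and> \<mu> [:-a, 1:] = delta \<iota> \<mu> f"

end

theory Submission
  imports Defs
begin

text \<open>Split \<open>f\<close> over the algebraic closure into linear factors \<open>x - c\<close>. A factor with
  \<open>\<mu>(x - c) = \<delta>(f)\<close> contributes \<open>\<delta>(f)\<close>; any other has \<open>\<mu>(x - c) < \<mu>(x - a)\<close>, so the
  ultrametric inequality applied to \<open>a - c = (x - c) - (x - a)\<close> gives \<open>\<mu>(x - c) = \<mu>(a - c)\<close>,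
  which lies in the value group. Hence \<open>\<nu>(f) = \<gamma> + k \<delta>(f)\<close> with \<open>\<gamma>\<close> in the value group
  and \<open>k \<ge> 1\<close>, since \<open>a\<close> is a root. The value group of an algebraically closed field is
  divisible (take \<open>k\<close>-th roots), and since an ordered group is torsion-free, \<open>k \<delta>\<close> lies in it
  only if \<open>\<delta>\<close> does.\<close>

lemma krull_valuation_mult:
  "krull_valuation v \<Longrightarrow> f \<noteq> 0 \<Longrightarrow> g \<noteq> 0 \<Longrightarrow> v (f * g) = v f + v g"
  unfolding krull_valuation_def by blast

lemma krull_valuation_add:
  "krull_valuation v \<Longrightarrow> f \<noteq> 0 \<Longrightarrow> g \<noteq> 0 \<Longrightarrow> f + g \<noteq> 0 \<Longrightarrow> min (v f) (v g) \<le> v (f + g)"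
  unfolding krull_valuation_def by blast

lemma krull_valuation_one:
  fixes v :: "'a::field poly \<Rightarrow> 'g::linordered_ab_group_add"
  assumes "krull_valuation v"
  shows "v 1 = 0"
proof -
  have "v (1 * 1) = v 1 + v 1"
    by (rule krull_valuation_mult[OF assms]) auto
  then show ?thesis by simp
qed

lemma krull_valuation_uminus:
  fixes v :: "'a::field poly \<Rightarrow> 'g::linordered_ab_group_add"
  assumes v: "krull_valuation v" and "p \<noteq> 0"
  shows "v (- p) = v p"
proof -
  have "v [:-1:] + v [:-1:] = v ([:-1:] * [:-1:])"
    by (rule krull_valuation_mult[OF v, symmetric]) auto
  also have "\<dots> = 0"
    using krull_valuation_one[OF v] by (simp add: one_pCons)
  finally have minus_one: "v [:-1:] = 0"
    by (metis add_neg_neg add_pos_pos less_irrefl linorder_neqE)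
  have "v ([:-1:] * p) = v [:-1:] + v p"
    by (rule krull_valuation_mult[OF v]) (use \<open>p \<noteq> 0\<close> in auto)
  then show ?thesis
    using minus_one by simp
qed

lemma krull_valuation_add_eq_left:
  fixes v :: "'a::field poly \<Rightarrow> 'g::linordered_ab_group_add"
  assumes v: "krull_valuation v" and "f \<noteq> 0" "g \<noteq> 0" "f + g \<noteq> 0" and less: "v f < v g"
  shows "v (f + g) = v f"
proof -
  have "min (v f) (v g) \<le> v (f + g)"
    using krull_valuation_add[OF v] assms by blast
  then have ge: "v f \<le> v (f + g)"
    using less by simp
  have "min (v (f + g)) (v (- g)) \<le> v ((f + g) + - g)"
    by (rule krull_valuation_add[OF v]) (use assms in auto)
  then have "v (f + g) \<le> v f"
    using less krull_valuation_uminus[OF v \<open>g \<noteq> 0\<close>] by (simp add: min_def split: if_splits)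
  with ge show ?thesis by simp
qed

lemma krull_valuation_const_power:
  fixes v :: "'a::field poly \<Rightarrow> 'g::linordered_ab_group_add"
  assumes v: "krull_valuation v" and "b \<noteq> 0"
  shows "v [:b ^ k:] = (\<Sum>i<k. v [:b:])"
proof (induction k)
  case 0
  then show ?case
    using krull_valuation_one[OF v] by (simp add: one_pCons)
next
  case (Suc k)
  have "v ([:b ^ k:] * [:b:]) = v [:b ^ k:] + v [:b:]"
    by (rule krull_valuation_mult[OF v]) (use \<open>b \<noteq> 0\<close> in auto)
  then show ?case
    using Suc by (simp add: mult.commute)
qed

lemma value_group_zero:
  fixes v :: "'a::field poly \<Rightarrow> 'g::linordered_ab_group_add"
  assumes "krull_valuation v"
  shows "0 \<in> value_group v"
proof -
  have "v [:1:] = 0"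
    using krull_valuation_one[OF assms] by (simp add: one_pCons)
  then show ?thesis
    unfolding value_group_def by force
qed

lemma value_group_add:
  fixes v :: "'a::field poly \<Rightarrow> 'g::linordered_ab_group_add"
  assumes v: "krull_valuation v" and "x \<in> value_group v" "y \<in> value_group v"
  shows "x + y \<in> value_group v"
proof -
  obtain c d where cd: "x = v [:c:]" "c \<noteq> 0" "y = v [:d:]" "d \<noteq> 0"
    using assms unfolding value_group_def by blast
  have "x + y = v ([:c:] * [:d:])"
    unfolding cd(1,3) by (rule krull_valuation_mult[OF v, symmetric]) (use cd in simp_all)
  also have "\<dots> = v [:c * d:]"
    by (simp add: mult.commute)
  finally show ?thesis
    unfolding value_group_def using cd by (intro CollectI exI[of _ "c * d"]) simp
qed

lemma value_group_uminus:
  fixes v :: "'a::field poly \<Rightarrow> 'g::linordered_ab_group_add"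
  assumes v: "krull_valuation v" and "x \<in> value_group v"
  shows "- x \<in> value_group v"
proof -
  obtain c where c: "x = v [:c:]" "c \<noteq> 0"
    using assms unfolding value_group_def by blast
  have "x + v [:inverse c:] = v ([:c:] * [:inverse c:])"
    unfolding c(1) by (rule krull_valuation_mult[OF v, symmetric]) (use c in simp_all)
  also have "\<dots> = 0"
    using c krull_valuation_one[OF v] by (simp add: one_pCons)
  finally have "- x = v [:inverse c:]"
    by (simp add: neg_eq_iff_add_eq_0)
  then show ?thesis
    using c unfolding value_group_def by auto
qed

lemma value_group_add_left_iff:
  fixes v :: "'a::field poly \<Rightarrow> 'g::linordered_ab_group_add"
  assumes v: "krull_valuation v" and "\<gamma> \<in> value_group v"
  shows "\<gamma> + x \<in> value_group v \<longleftrightarrow> x \<in> value_group v"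
proof
  assume "\<gamma> + x \<in> value_group v"
  then have "- \<gamma> + (\<gamma> + x) \<in> value_group v"
    using value_group_add[OF v] value_group_uminus[OF v assms(2)] by blast
  then show "x \<in> value_group v" by simp
qed (use value_group_add[OF v assms(2)] in blast)

lemma value_group_sum_const:
  fixes v :: "'a::field poly \<Rightarrow> 'g::linordered_ab_group_add" and k :: nat
  assumes v: "krull_valuation v" and "x \<in> value_group v"
  shows "(\<Sum>i<k. x) \<in> value_group v"
  by (induction k) (simp_all add: value_group_zero[OF v] value_group_add[OF v _ assms(2)])

lemma sum_const_lessThan_cancel:
  fixes x y :: "'g::linordered_ab_group_add" and k :: nat
  assumes "k > 0" and eq: "(\<Sum>i<k. x) = (\<Sum>i<k. y)"
  shows "x = y"
proof (rule linorder_cases[of x y])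
  assume "x < y"
  then have "(\<Sum>i<k. x) < (\<Sum>i<k. y)"
    using \<open>k > 0\<close> by (intro sum_strict_mono) auto
  with eq show ?thesis by simp
next
  assume "y < x"
  then have "(\<Sum>i<k. y) < (\<Sum>i<k. x)"
    using \<open>k > 0\<close> by (intro sum_strict_mono) auto
  with eq show ?thesis by simp
qed

lemma value_group_sum_const_iff:
  fixes v :: "'a::alg_closed_field poly \<Rightarrow> 'g::linordered_ab_group_add" and k :: nat
  assumes v: "krull_valuation v" and "k > 0"
  shows "(\<Sum>i<k. x) \<in> value_group v \<longleftrightarrow> x \<in> value_group v"
proof
  assume "(\<Sum>i<k. x) \<in> value_group v"
  then obtain e where e: "(\<Sum>i<k. x) = v [:e:]" "e \<noteq> 0"
    unfolding value_group_def by auto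
  obtain b where b: "b ^ k = e"
    using nth_root_exists[OF \<open>k > 0\<close>] by blast
  with e \<open>k > 0\<close> have "b \<noteq> 0" by auto
  have "(\<Sum>i<k. x) = (\<Sum>i<k. v [:b:])"
    unfolding e(1) b[symmetric] by (rule krull_valuation_const_power[OF v \<open>b \<noteq> 0\<close>])
  then have "x = v [:b:]"
    by (rule sum_const_lessThan_cancel[OF \<open>k > 0\<close>])
  then show "x \<in> value_group v"
    using \<open>b \<noteq> 0\<close> unfolding value_group_def by auto
qed (rule value_group_sum_const[OF v])

lemma linear_factor_valuation_cases:
  fixes \<mu> :: "'a::field poly \<Rightarrow> 'g::linordered_ab_group_add"
  assumes \<mu>: "krull_valuation \<mu>" and le: "\<mu> [:-c, 1:] \<le> \<mu> [:-a, 1:]"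
  shows "\<mu> [:-c, 1:] = \<mu> [:-a, 1:] \<or> (c \<noteq> a \<and> \<mu> [:-c, 1:] \<in> value_group \<mu>)"
proof (cases "\<mu> [:-c, 1:] = \<mu> [:-a, 1:]")
  case False
  with le have "\<mu> [:-c, 1:] < \<mu> [:-a, 1:]"
    by simp
  then have "c \<noteq> a"
    by auto
  have less: "\<mu> [:-c, 1:] < \<mu> (- [:-a, 1:])"
    using \<open>\<mu> [:-c, 1:] < \<mu> [:-a, 1:]\<close> krull_valuation_uminus[OF \<mu>, of "[:-a, 1:]"] by simp
  have "\<mu> ([:-c, 1:] + - [:-a, 1:]) = \<mu> [:-c, 1:]"
    by (rule krull_valuation_add_eq_left[OF \<mu> _ _ _ less]) (use \<open>c \<noteq> a\<close> in simp_all)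
  then have "\<mu> [:-c, 1:] = \<mu> [:a - c:]"
    by simp
  with \<open>c \<noteq> a\<close> show ?thesis
    unfolding value_group_def by auto
qed simp

lemma valuation_eq_value_group_plus_multiple:
  fixes \<mu> :: "'a::alg_closed_field poly \<Rightarrow> 'g::linordered_ab_group_add"
  assumes \<mu>: "krull_valuation \<mu>" and "p \<noteq> 0"
    and "\<And>c. poly p c = 0 \<Longrightarrow> \<mu> [:-c, 1:] \<le> \<mu> [:-a, 1:]"
  shows "\<exists>\<gamma>\<in>value_group \<mu>. \<exists>k::nat. \<mu> p = \<gamma> + (\<Sum>i<k. \<mu> [:-a, 1:]) \<and> (poly p a = 0 \<longrightarrow> k > 0)"
  using assms(2,3)
proof (induction "degree p" arbitrary: p rule: less_induct)
  case less
  show ?case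
  proof (cases "degree p = 0")
    case True
    then obtain c where "p = [:c:]" "c \<noteq> 0"
      using less.prems(1) by (metis degree_eq_zeroE pCons_0_0)
    then have "\<mu> p \<in> value_group \<mu>" and "poly p a \<noteq> 0"
      unfolding value_group_def by auto
    then show ?thesis
      by (intro bexI[of _ "\<mu> p"] exI[of _ 0]) simp_all
  next
    case False
    then obtain c where "poly p c = 0"
      using alg_closed_imp_poly_has_root by blast
    then obtain q where p: "p = [:-c, 1:] * q"
      by (meson dvdE poly_eq_0_iff_dvd)
    with less.prems have "q \<noteq> 0" by auto
    then have "degree q < degree p"
      unfolding p by (subst degree_mult_eq) auto
    moreover have "\<And>d. poly q d = 0 \<Longrightarrow> \<mu> [:-d, 1:] \<le> \<mu> [:-a, 1:]"
      using less.prems(2) p by auto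
    ultimately obtain \<gamma> and k :: nat where \<gamma>: "\<gamma> \<in> value_group \<mu>"
      and \<mu>q: "\<mu> q = \<gamma> + (\<Sum>i<k. \<mu> [:-a, 1:])" and k: "poly q a = 0 \<longrightarrow> k > 0"
      using less.hyps \<open>q \<noteq> 0\<close> by blast
    have \<mu>p: "\<mu> p = \<mu> [:-c, 1:] + \<mu> q"
      unfolding p by (rule krull_valuation_mult[OF \<mu>]) (use \<open>q \<noteq> 0\<close> in auto)
    from linear_factor_valuation_cases[OF \<mu> less.prems(2)[OF \<open>poly p c = 0\<close>]]
    show ?thesis
    proof
      assume "\<mu> [:-c, 1:] = \<mu> [:-a, 1:]"
      then have "\<mu> p = \<gamma> + (\<Sum>i<Suc k. \<mu> [:-a, 1:])"
        using \<mu>p \<mu>q by (simp add: algebra_simps)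
      with \<gamma> show ?thesis
        by (intro bexI[of _ \<gamma>] exI[of _ "Suc k"]) simp_all
    next
      assume c: "c \<noteq> a \<and> \<mu> [:-c, 1:] \<in> value_group \<mu>"
      then have "\<mu> [:-c, 1:] + \<gamma> \<in> value_group \<mu>"
        using value_group_add[OF \<mu> _ \<gamma>] by blast
      moreover have "\<mu> p = (\<mu> [:-c, 1:] + \<gamma>) + (\<Sum>i<k. \<mu> [:-a, 1:])"
        using \<mu>p \<mu>q by (simp add: add.assoc)
      moreover have "poly p a = 0 \<longrightarrow> k > 0"
        using p c k by auto
      ultimately show ?thesis
        by (intro bexI[of _ "\<mu> [:-c, 1:] + \<gamma>"] exI[of _ k] conjI)
    qed
  qed
qed

lemma alg_closure_emb_map_poly_nonzero:
  assumes \<iota>: "is_alg_closure_emb \<iota>" and "f \<noteq> 0"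
  shows "map_poly \<iota> f \<noteq> 0"
proof -
  have add: "\<And>x y. \<iota> (x + y) = \<iota> x + \<iota> y" and mult: "\<And>x y. \<iota> (x * y) = \<iota> x * \<iota> y"
    and one: "\<iota> 1 = 1"
    using \<iota> unfolding is_alg_closure_emb_def by auto
  have "\<iota> 0 + \<iota> 0 = \<iota> 0 + 0"
    using add[of 0 0] by simp
  then have "\<iota> 0 = 0"
    by (rule add_left_imp_eq)
  have nonzero: "\<iota> x \<noteq> 0" if "x \<noteq> 0" for x
    using mult[of x "inverse x"] one that by auto
  have "coeff (map_poly \<iota> f) (degree f) = \<iota> (lead_coeff f)"
    using \<open>\<iota> 0 = 0\<close> by (simp add: coeff_map_poly)
  then show ?thesis
    using nonzero \<open>f \<noteq> 0\<close> by auto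
qed

lemma root_valuation_le_delta:
  assumes "map_poly \<iota> f \<noteq> 0" and "poly (map_poly \<iota> f) c = 0"
  shows "\<mu> [:-c, 1:] \<le> delta \<iota> \<mu> f"
proof -
  have "{\<mu> [:-c, 1:] | c. poly (map_poly \<iota> f) c = 0} = (\<lambda>c. \<mu> [:-c, 1:]) ` {c. poly (map_poly \<iota> f) c = 0}"
    by auto
  then have "finite {\<mu> [:-c, 1:] | c. poly (map_poly \<iota> f) c = 0}"
    using poly_roots_finite[OF assms(1)] by simp
  then show ?thesis
    unfolding delta_def by (rule Max_ge) (use assms(2) in blast)
qed

theorem lemma3p5:
  fixes \<iota> :: "'k::field \<Rightarrow> 'kb::alg_closed_field"
    and \<nu> :: "'k poly \<Rightarrow> 'g::linordered_ab_group_add"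
    and \<mu> :: "'kb poly \<Rightarrow> 'g"
    and f :: "'k poly" and a :: 'kb
  assumes "is_alg_closure_emb \<iota>"
    and "krull_valuation \<nu>"
    and "krull_valuation \<mu>"
    and "extends_val \<iota> \<mu> \<nu>"
    and "degree f > 0"
    and "optimizing_root \<iota> \<mu> f a"
  shows "\<nu> f \<in> value_group \<mu> \<longleftrightarrow> delta \<iota> \<mu> f \<in> value_group \<mu>"
proof -
  have "f \<noteq> 0"
    using assms(5) by auto
  then have F: "map_poly \<iota> f \<noteq> 0"
    using alg_closure_emb_map_poly_nonzero[OF assms(1)] by blast
  have \<nu>f: "\<nu> f = \<mu> (map_poly \<iota> f)"
    using assms(4) \<open>f \<noteq> 0\<close> unfolding extends_val_def by simp
  have root: "poly (map_poly \<iota> f) a = 0" and \<delta>: "\<mu> [:-a, 1:] = delta \<iota> \<mu> f"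
    using assms(6) unfolding optimizing_root_def by blast+
  have "\<And>c. poly (map_poly \<iota> f) c = 0 \<Longrightarrow> \<mu> [:-c, 1:] \<le> \<mu> [:-a, 1:]"
    unfolding \<delta> by (rule root_valuation_le_delta[OF F])
  then obtain \<gamma> and k :: nat where \<gamma>: "\<gamma> \<in> value_group \<mu>" and "k > 0"
    and \<mu>F: "\<mu> (map_poly \<iota> f) = \<gamma> + (\<Sum>i<k. \<mu> [:-a, 1:])"
    using valuation_eq_value_group_plus_multiple[OF assms(3) F] root by blast
  have "\<nu> f \<in> value_group \<mu> \<longleftrightarrow> (\<Sum>i<k. \<mu> [:-a, 1:]) \<in> value_group \<mu>"
    unfolding \<nu>f \<mu>F by (rule value_group_add_left_iff[OF assms(3) \<gamma>])
  also have "\<dots> \<longleftrightarrow> delta \<iota> \<mu> f \<in> value_group \<mu>"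
    unfolding \<delta>[symmetric] by (rule value_group_sum_const_iff[OF assms(3) \<open>k > 0\<close>])
  finally show ?thesis .
qed

end
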